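(* Let $V$ be an $n$-dimensional vector space over a field $K$ and $\mathcal{F}\colon\{0\}=V_0\subset V_1\subset\cdots\subset V_n=V$ a chain of subspaces with $\dim V_i=i$. Let $U\le V$ be a subspace, $v\mapsto\overline v$ the canonical map $V\to\overline V:=V/U$, $P$ the stabilizer of $U$ in $\mathrm{Aut}(V)$, and $\pi\colon P\to\mathrm{Aut}(\overline V)$ the epimorphism $\pi(f)(\overline v)=\overline{f(v)}$. Then $\pi$ maps $\mathrm{stab}_P(\mathcal{F})$ onto $\mathrm{stab}_{\mathrm{Aut}(\overline V)}(\overline{\mathcal{F}})$, where $\overline{\mathcal{F}}$ is the chain $0=\overline V_0\subseteq\overline V_1\subseteq\cdots\subseteq\overline V_n=\overline V$.
   Context: $\mathrm{stab}_H(\mathcal{F})$ denotes the set of elements of $H$ mapping each member of the chain onto itself; $\overline{V}_i$ is the image of $V_i$ in $V/U$. *)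

theory Defs
  imports "HOL.Vector_Spaces"
begin

definition lin_aut :: "('k::field \<Rightarrow> 'v::ab_group_add \<Rightarrow> 'v) \<Rightarrow> ('v \<Rightarrow> 'v) set" where
  "lin_aut s = {f. Vector_Spaces.linear s s f \<and> bij f}"

definition chain_stab :: "('v \<Rightarrow> 'v) set \<Rightarrow> nat \<Rightarrow> (nat \<Rightarrow> 'v set) \<Rightarrow> ('v \<Rightarrow> 'v) set" where
  "chain_stab H n Vs = {f \<in> H. \<forall>i\<le>n. f ` Vs i = Vs i}"

text \<open>The induced map on the quotient: given the canonical projection q : V \<rightarrow> V/U,
  pi(f) is the map with pi(f)(q v) = q (f v).\<close>
definition quot_induced :: "('v \<Rightarrow> 'w) \<Rightarrow> ('v \<Rightarrow> 'v) \<Rightarrow> ('w \<Rightarrow> 'w)" where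
  "quot_induced q f = (\<lambda>w. q (f (inv q w)))"

end

theory Submission
  imports Defs
begin

text \<open>
  That pi maps stab_P(F) into the stabilizer of the image flag is formal: an automorphism
  stabilizing U = ker q respects the fibres of q. For the converse, choose a basis b_1, ..., b_n
  with b_i in V_i - V_(i-1), taking b_i in U whenever the flag jumps inside U at step i. Lift g
  by fixing the b_i that lie in U and sending every other b_i to a preimage of g (q b_i) in V_i.
  The lift preserves the flag and is injective by induction along it: a vector of V_i killed by
  the lift lies in U, hence in V_(i-1) if the flag does not jump inside U at step i; if it does,
  the lift fixes b_i and preserves V_(i-1), which forces the b_i-coordinate to vanish.
\<close>

lemma quot_induced_apply:
  assumes "\<And>x y. q x = q y \<Longrightarrow> q (f x) = q (f y)"
  shows "quot_induced q f (q v) = q (f v)"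
  unfolding quot_induced_def by (rule assms) (simp add: f_inv_into_f)

lemma quot_induced_unique:
  assumes "surj q" and "\<And>v. q (f v) = g (q v)"
  shows "quot_induced q f = g"
  using assms by (auto simp: quot_induced_def fun_eq_iff surj_f_inv_f)

lemma quot_induced_image:
  assumes "\<And>x y. q x = q y \<Longrightarrow> q (f x) = q (f y)"
  shows "quot_induced q f ` q ` S = q ` f ` S"
  by (simp add: image_image quot_induced_apply[of q f, OF assms])

lemma linear_respects_kernel:
  assumes q: "Vector_Spaces.linear sV sW q" and ker: "{v. q v = 0} = U"
    and f: "Vector_Spaces.linear sV sV f" and fU: "f ` U \<subseteq> U"
    and "q x = q y"
  shows "q (f x) = q (f y)"
proof -
  interpret q: linear sV sW q by (rule q)
  interpret f: linear sV sV f by (rule f)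
  have "x - y \<in> U" using ker \<open>q x = q y\<close> by (auto simp: q.diff)
  then have "f x - f y \<in> U" using fU by (auto simp: f.diff[symmetric])
  then show ?thesis using ker by (auto simp: q.diff)
qed

lemma quot_induced_lin_aut:
  assumes q: "Vector_Spaces.linear sV sW q" "surj q" and ker: "{v. q v = 0} = U"
    and f: "f \<in> lin_aut sV" and fU: "f ` U = U"
  shows "quot_induced q f \<in> lin_aut sW"
proof -
  interpret q: linear sV sW q by (rule q(1))
  have f_lin: "Vector_Spaces.linear sV sV f" and "bij f" using f by (auto simp: lin_aut_def)
  interpret f: linear sV sV f by (rule f_lin)
  define h where "h = quot_induced q f"
  have h: "h (q v) = q (f v)" for v
    unfolding h_def using linear_respects_kernel[OF q(1) ker f_lin] fU
    by (intro quot_induced_apply) blast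
  have lift: "\<exists>v. w = q v" for w using q(2) by (metis surjD)
  have "Vector_Spaces.linear sW sW h"
    unfolding linear_iff
  proof (intro conjI allI)
    fix x y
    obtain a b where ab: "x = q a" "y = q b" using lift by metis
    have "h (q a + q b) = q (f a) + q (f b)"
      by (simp only: q.add[symmetric] h f.add)
    then show "h (x + y) = h x + h y" by (simp add: ab h)
  next
    fix c x
    obtain a where a: "x = q a" using lift by metis
    have "h (sW c (q a)) = sW c (q (f a))"
      by (simp only: q.scale[symmetric] h f.scale)
    then show "h (sW c x) = sW c (h x)" by (simp add: a h)
  qed (simp_all add: q.vs1.vector_space_axioms q.vs2.vector_space_axioms)
  moreover have "inj h"
  proof (rule injI)
    fix x y assume "h x = h y"
    moreover obtain a b where ab: "x = q a" "y = q b" using lift by metis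
    ultimately have "f (a - b) \<in> f ` U" using ker fU h by (auto simp: f.diff q.diff)
    then have "a - b \<in> U" using \<open>bij f\<close> by (metis bij_is_inj inj_image_mem_iff)
    then show "x = y" using ab ker by (auto simp: q.diff)
  qed
  moreover have "w \<in> range h" for w
  proof -
    obtain v where "w = q v" using lift by metis
    moreover obtain u where "v = f u" using \<open>bij f\<close> by (rule bij_pointE)
    ultimately show ?thesis using h by (metis rangeI)
  qed
  ultimately show ?thesis by (auto simp: lin_aut_def h_def bij_def)
qed

lemma quot_induced_chain_stab:
  assumes q: "Vector_Spaces.linear sV sW q" "surj q" and ker: "{v. q v = 0} = U"
    and f: "f \<in> chain_stab {f \<in> lin_aut sV. f ` U = U} n Vs"
  shows "quot_induced q f \<in> chain_stab (lin_aut sW) n (\<lambda>i. q ` Vs i)"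
proof -
  have aut: "f \<in> lin_aut sV" "f ` U = U" and flag: "\<And>i. i \<le> n \<Longrightarrow> f ` Vs i = Vs i"
    using f by (auto simp: chain_stab_def)
  have resp: "q (f x) = q (f y)" if "q x = q y" for x y
  proof (rule linear_respects_kernel[OF q(1) ker, where f = f])
    show "Vector_Spaces.linear sV sV f" using aut(1) by (simp add: lin_aut_def)
    show "f ` U \<subseteq> U" using aut(2) by (rule equalityD1)
  qed (rule that)
  have "quot_induced q f ` q ` Vs i = q ` Vs i" if "i \<le> n" for i
    using quot_induced_image[of q f, OF resp] flag[OF that] by metis
  then show ?thesis
    using quot_induced_lin_aut[OF q ker aut] by (simp add: chain_stab_def)
qed

lemma (in finite_dimensional_vector_space) linear_inj_image_subspace_eq:
  assumes "Vector_Spaces.linear scale scale f" "inj f" "subspace S" "f ` S \<subseteq> S"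
  shows "f ` S = S"
proof (rule subspace_dim_equal)
  interpret fd: finite_dimensional_vector_space_pair_1 scale Basis scale ..
  interpret f: linear scale scale f by fact
  show "subspace (f ` S)" using assms(3) by (rule f.subspace_image)
  show "dim S \<le> dim (f ` S)"
    using fd.dim_image_eq[OF assms(1)] assms(2) by (simp add: inj_on_subset)
qed (use assms in auto)

lemma (in vector_space) finite_dimensional_of_finite_span:
  assumes "finite B" "span B = UNIV"
  obtains Basis where "finite_dimensional_vector_space scale Basis"
proof -
  obtain Basis where "Basis \<subseteq> B" "independent Basis" "B \<subseteq> span Basis"
    by (rule maximal_independent_subset)
  moreover have "span Basis = UNIV"
    using span_mono[OF \<open>B \<subseteq> span Basis\<close>] assms(2) by (auto simp: span_span)
  ultimately have "finite_dimensional_vector_space scale Basis"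
    using assms(1) by unfold_locales (auto intro: finite_subset)
  then show thesis by (rule that)
qed

lemma (in vector_space_pair) linear_extend_indexed:
  assumes "vs1.independent (b ` I)" "inj_on b I"
  obtains f where "Vector_Spaces.linear s1 s2 f" "\<And>i. i \<in> I \<Longrightarrow> f (b i) = t i"
proof -
  obtain f where "Vector_Spaces.linear s1 s2 f" "\<forall>x\<in>b ` I. f x = t (inv_into I b x)"
    using linear_independent_extend[OF assms(1), of "t \<circ> inv_into I b"] by auto
  then show thesis using assms(2) by (intro that) auto
qed

locale complete_flag = finite_dimensional_vector_space scale Basis
  for scale :: "'a::field \<Rightarrow> 'b::ab_group_add \<Rightarrow> 'b" and Basis :: "'b set" +
  fixes n :: nat and Vs :: "nat \<Rightarrow> 'b set"
  assumes subspace_flag: "i \<le> n \<Longrightarrow> subspace (Vs i)"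
    and dim_flag: "i \<le> n \<Longrightarrow> dim (Vs i) = i"
    and flag_strict_mono: "i < n \<Longrightarrow> Vs i \<subset> Vs (Suc i)"
    and flag_bot: "Vs 0 = {0}"
    and flag_top: "Vs n = UNIV"
begin

lemma flag_mono: "i \<le> j \<Longrightarrow> j \<le> n \<Longrightarrow> Vs i \<subseteq> Vs j"
proof (induction j rule: dec_induct)
  case (step j)
  then show ?case using flag_strict_mono[of j] by auto
qed simp

definition adapted_basis :: "(nat \<Rightarrow> 'b) \<Rightarrow> bool" where
  "adapted_basis b \<longleftrightarrow> (\<forall>i\<in>{1..n}. b i \<in> Vs i \<and> b i \<notin> Vs (i - 1))"

lemma adapted_basis_exists:
  obtains b where "adapted_basis b"
    and "\<And>i. i \<in> {1..n} \<Longrightarrow> \<not> Vs i \<inter> U \<subseteq> Vs (i - 1) \<Longrightarrow> b i \<in> U"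
proof -
  have "\<exists>x. x \<in> Vs i \<and> x \<notin> Vs (i - 1) \<and> (\<not> Vs i \<inter> U \<subseteq> Vs (i - 1) \<longrightarrow> x \<in> U)"
    if "i \<in> {1..n}" for i
  proof -
    have "i - 1 < n" "Suc (i - 1) = i" using that by auto
    then have "Vs (i - 1) \<subset> Vs i" using flag_strict_mono[of "i - 1"] by simp
    then show ?thesis by (cases "Vs i \<inter> U \<subseteq> Vs (i - 1)") auto
  qed
  then obtain b where "\<forall>i\<in>{1..n}. b i \<in> Vs i \<and> b i \<notin> Vs (i - 1)
      \<and> (\<not> Vs i \<inter> U \<subseteq> Vs (i - 1) \<longrightarrow> b i \<in> U)"
    by metis
  then show thesis by (intro that) (auto simp: adapted_basis_def)
qed

lemma adapted_basis_inj:
  assumes "adapted_basis b"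
  shows "inj_on b {1..n}"
proof (rule linorder_inj_onI')
  fix i j assume i: "i \<in> {1..n}" and j: "j \<in> {1..n}" and "i < j"
  then have "Vs i \<subseteq> Vs (j - 1)" using flag_mono[of i "j - 1"] by auto
  moreover have "b i \<in> Vs i" using assms i by (auto simp: adapted_basis_def)
  moreover have "b j \<notin> Vs (j - 1)" using assms j by (auto simp: adapted_basis_def)
  ultimately show "b i \<noteq> b j" by (metis subsetD)
qed

lemma adapted_basis_span_subset:
  assumes "adapted_basis b" "k \<le> n"
  shows "span (b ` {1..k}) \<subseteq> Vs k"
proof (rule span_minimal)
  show "b ` {1..k} \<subseteq> Vs k"
    using assms flag_mono by (fastforce simp: adapted_basis_def)
qed (use assms subspace_flag in auto)

lemma adapted_basis_independent:
  assumes "adapted_basis b" "k \<le> n"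
  shows "independent (b ` {1..k})"
  using assms(2)
proof (induction k)
  case (Suc k)
  have "b (Suc k) \<notin> Vs k"
    using assms(1) Suc.prems by (auto simp: adapted_basis_def dest: bspec[of _ _ "Suc k"])
  then have "b (Suc k) \<notin> span (b ` {1..k})"
    using adapted_basis_span_subset[OF assms(1), of k] Suc.prems by auto
  then show ?case
    using Suc by (simp add: atLeastAtMostSuc_conv independent_insertI)
qed (simp add: independent_empty)

lemma adapted_basis_span:
  assumes "adapted_basis b" "k \<le> n"
  shows "span (b ` {1..k}) = Vs k"
proof
  have "card (b ` {1..k}) = k"
    using inj_on_subset[OF adapted_basis_inj[OF assms(1)]] assms(2) by (simp add: card_image)
  moreover have "b ` {1..k} \<subseteq> Vs k"
    using adapted_basis_span_subset[OF assms] span_superset by blast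
  ultimately show "Vs k \<subseteq> span (b ` {1..k})"
    using adapted_basis_independent[OF assms] dim_flag[OF assms(2)]
    by (intro card_ge_dim_independent) auto
qed (rule adapted_basis_span_subset[OF assms])

lemma adapted_basis_preserves_flag:
  assumes f: "Vector_Spaces.linear scale scale f" and b: "adapted_basis b"
    and fb: "\<And>i. i \<in> {1..n} \<Longrightarrow> f (b i) \<in> Vs i" and "k \<le> n"
  shows "f ` Vs k \<subseteq> Vs k"
proof -
  interpret f: linear scale scale f by (rule f)
  have "f ` Vs k = span (f ` b ` {1..k})"
    using adapted_basis_span[OF b \<open>k \<le> n\<close>] f.span_image by metis
  also have "\<dots> \<subseteq> Vs k"
    using fb \<open>k \<le> n\<close> flag_mono subspace_flag by (intro span_minimal) force+
  finally show ?thesis .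
qed

lemma kernel_in_lower_flag:
  assumes f: "Vector_Spaces.linear scale scale f" and b: "adapted_basis b" and "Suc k \<le> n"
    and preserves: "f ` Vs k \<subseteq> Vs k" and fixed: "f (b (Suc k)) = b (Suc k)"
    and x: "x \<in> Vs (Suc k)" "f x = 0"
  shows "x \<in> Vs k"
proof -
  interpret f: linear scale scale f by (rule f)
  let ?b = "b (Suc k)"
  have Vk: "subspace (Vs k)" using subspace_flag \<open>Suc k \<le> n\<close> by simp
  have b_new: "?b \<notin> Vs k"
    using b \<open>Suc k \<le> n\<close> by (auto simp: adapted_basis_def dest: bspec[of _ _ "Suc k"])
  have "x \<in> span (insert ?b (b ` {1..k}))"
    using adapted_basis_span[OF b \<open>Suc k \<le> n\<close>] x(1) by (simp add: atLeastAtMostSuc_conv)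
  then obtain a where y: "x - scale a ?b \<in> Vs k"
    using adapted_basis_span[OF b, of k] \<open>Suc k \<le> n\<close> by (auto simp: span_breakdown_eq)
  have "f (x - scale a ?b) = - (scale a ?b)"
    using fixed x(2) by (simp add: f.diff f.scale)
  then have "scale a ?b \<in> Vs k"
    using preserves y Vk by (metis image_subset_iff subspace_neg minus_minus)
  have "a = 0"
  proof (rule ccontr)
    assume "a \<noteq> 0"
    then have "?b = scale (inverse a) (scale a ?b)" by simp
    then show False using b_new \<open>scale a ?b \<in> Vs k\<close> Vk by (metis subspace_scale)
  qed
  then show ?thesis using y by simp
qed

lemma flag_preserving_inj:
  assumes f: "Vector_Spaces.linear scale scale f" and b: "adapted_basis b"
    and preserves: "\<And>k. k \<le> n \<Longrightarrow> f ` Vs k \<subseteq> Vs k"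
    and kernel: "\<And>i x. i \<in> {1..n} \<Longrightarrow> f (b i) \<noteq> b i \<Longrightarrow> x \<in> Vs i \<Longrightarrow> f x = 0
      \<Longrightarrow> x \<in> Vs (i - 1)"
  shows "inj f"
proof -
  interpret f: linear scale scale f by (rule f)
  have "x = 0" if "k \<le> n" "x \<in> Vs k" "f x = 0" for k x
    using that
  proof (induction k arbitrary: x)
    case 0
    then show ?case using flag_bot by simp
  next
    case (Suc k)
    then have "x \<in> Vs k"
      using kernel_in_lower_flag[OF f b _ preserves] kernel[of "Suc k" x] by fastforce
    then show ?case using Suc by simp
  qed
  then show ?thesis using f.inj_iff_eq_0 flag_top by auto
qed

lemma lift_flag_stabilizer:
  assumes q: "Vector_Spaces.linear scale sW q" and ker: "{v. q v = 0} = U"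
    and g: "Vector_Spaces.linear sW sW g" "inj g"
    and g_flag: "\<And>i. i \<le> n \<Longrightarrow> g ` q ` Vs i \<subseteq> q ` Vs i"
  obtains f where "f \<in> lin_aut scale" "f ` U = U" "\<And>i. i \<le> n \<Longrightarrow> f ` Vs i = Vs i"
    "\<And>v. q (f v) = g (q v)"
proof -
  interpret q: linear scale sW q by (rule q)
  interpret g: linear sW sW g by (rule g(1))
  interpret VW: vector_space_pair scale sW ..
  interpret VV: vector_space_pair scale scale ..
  obtain b where b: "adapted_basis b"
    and b_U: "\<And>i. i \<in> {1..n} \<Longrightarrow> \<not> Vs i \<inter> U \<subseteq> Vs (i - 1) \<Longrightarrow> b i \<in> U"
    using adapted_basis_exists[of U] by blast
  have "\<forall>i\<in>{1..n}. \<exists>w. w \<in> Vs i \<and> q w = g (q (b i)) \<and> (b i \<in> U \<longrightarrow> w = b i)"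
  proof
    fix i assume i: "i \<in> {1..n}"
    show "\<exists>w. w \<in> Vs i \<and> q w = g (q (b i)) \<and> (b i \<in> U \<longrightarrow> w = b i)"
    proof (cases "b i \<in> U")
      case True
      then show ?thesis using b i ker by (auto simp: adapted_basis_def)
    next
      case False
      have "g (q (b i)) \<in> q ` Vs i" using g_flag[of i] b i by (auto simp: adapted_basis_def)
      then show ?thesis using False by auto
    qed
  qed
  then obtain t where t: "\<forall>i\<in>{1..n}. t i \<in> Vs i \<and> q (t i) = g (q (b i)) \<and> (b i \<in> U \<longrightarrow> t i = b i)"
    by metis
  obtain f where f: "Vector_Spaces.linear scale scale f"
    and fb: "\<And>i. i \<in> {1..n} \<Longrightarrow> f (b i) = t i"
    using VV.linear_extend_indexed[where t = t, OF adapted_basis_independent[OF b order.refl]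
        adapted_basis_inj[OF b]] by blast
  have comm: "q (f v) = g (q v)" for v
  proof (rule VW.linear_eq_on[where f = "q \<circ> f" and g = "g \<circ> q", simplified])
    show "Vector_Spaces.linear scale sW (q \<circ> f)" using f q by (rule Vector_Spaces.linear_compose)
    show "Vector_Spaces.linear scale sW (g \<circ> q)" using q g(1) by (rule Vector_Spaces.linear_compose)
    show "v \<in> span (b ` {1..n})" using adapted_basis_span[OF b order.refl] flag_top by simp
    fix x assume "x \<in> b ` {1..n}"
    then obtain i where "i \<in> {1..n}" "x = b i" by blast
    then show "q (f x) = g (q x)" using fb t by simp
  qed
  have g_eq_0: "g w = 0 \<longleftrightarrow> w = 0" for w
    using g(2) g.inj_iff_eq_0 by auto
  have f_U: "f x \<in> U \<longleftrightarrow> x \<in> U" for x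
    by (simp add: ker[symmetric] comm g_eq_0)
  have preserves: "f ` Vs k \<subseteq> Vs k" if "k \<le> n" for k
    using adapted_basis_preserves_flag[OF f b _ that] fb t by simp
  have "inj f"
  proof (rule flag_preserving_inj[OF f b preserves])
    fix i x assume i: "i \<in> {1..n}" and "f (b i) \<noteq> b i" "x \<in> Vs i" "f x = 0"
    then have "b i \<notin> U" using fb t by auto
    then have "Vs i \<inter> U \<subseteq> Vs (i - 1)" using b_U i by blast
    moreover have "x \<in> U" using f_U[of x] \<open>f x = 0\<close> by (simp add: ker[symmetric])
    ultimately show "x \<in> Vs (i - 1)" using \<open>x \<in> Vs i\<close> by blast
  qed
  then have "bij f" using linear_inj_imp_surj[OF f] by (simp add: bij_def)
  show thesis
  proof (rule that)
    show "f \<in> lin_aut scale" using f \<open>bij f\<close> by (simp add: lin_aut_def)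
    have "f -` U = U" using f_U by auto
    then show "f ` U = U" using \<open>bij f\<close> by (metis bij_is_surj surj_image_vimage_eq)
    show "f ` Vs i = Vs i" if "i \<le> n" for i
      using linear_inj_image_subspace_eq[OF f \<open>inj f\<close> subspace_flag[OF that] preserves[OF that]] .
  qed (rule comm)
qed

end

theorem lemma7p5:
  fixes sV :: "'k::field \<Rightarrow> 'v::ab_group_add \<Rightarrow> 'v"
    and sW :: "'k \<Rightarrow> 'w::ab_group_add \<Rightarrow> 'w"
    and n :: nat
    and Vs :: "nat \<Rightarrow> 'v set"
    and U :: "'v set"
    and q :: "'v \<Rightarrow> 'w"
  assumes vsV: "vector_space sV"
    and vsW: "vector_space sW"
    and fin: "\<exists>B. finite B \<and> module.span sV B = UNIV"
    and dimV: "vector_space.dim sV (UNIV :: 'v set) = n"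
    and chain_sub: "\<And>i. i \<le> n \<Longrightarrow> module.subspace sV (Vs i)"
    and chain_dim: "\<And>i. i \<le> n \<Longrightarrow> vector_space.dim sV (Vs i) = i"
    and chain_mono: "\<And>i. i < n \<Longrightarrow> Vs i \<subset> Vs (Suc i)"
    and chain_0: "Vs 0 = {0}"
    and chain_n: "Vs n = UNIV"
    and U_sub: "module.subspace sV U"
    and q_lin: "Vector_Spaces.linear sV sW q"
    and q_surj: "surj q"
    and q_ker: "{v. q v = 0} = U"
  shows "quot_induced q ` chain_stab {f \<in> lin_aut sV. f ` U = U} n Vs
         = chain_stab (lin_aut sW) n (\<lambda>i. q ` Vs i)"
proof -
  interpret V: vector_space sV by (rule vsV)
  obtain B where "finite B" "V.span B = UNIV" using fin by blast
  then obtain Basis where fd: "finite_dimensional_vector_space sV Basis"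
    by (rule V.finite_dimensional_of_finite_span)
  interpret F: complete_flag sV Basis n Vs
    by (rule complete_flag.intro[OF fd complete_flag_axioms.intro])
      (fact chain_sub chain_dim chain_mono chain_0 chain_n)+
  show ?thesis
  proof (intro subset_antisym subsetI)
    fix h assume "h \<in> quot_induced q ` chain_stab {f \<in> lin_aut sV. f ` U = U} n Vs"
    then show "h \<in> chain_stab (lin_aut sW) n (\<lambda>i. q ` Vs i)"
      using quot_induced_chain_stab[OF q_lin q_surj q_ker] by blast
  next
    fix g assume "g \<in> chain_stab (lin_aut sW) n (\<lambda>i. q ` Vs i)"
    then have g: "Vector_Spaces.linear sW sW g" "inj g" "\<And>i. i \<le> n \<Longrightarrow> g ` q ` Vs i = q ` Vs i"
      by (auto simp: chain_stab_def lin_aut_def bij_is_inj)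
    obtain f where "f \<in> lin_aut sV" "f ` U = U" "\<And>i. i \<le> n \<Longrightarrow> f ` Vs i = Vs i"
      and "\<And>v. q (f v) = g (q v)"
      using F.lift_flag_stabilizer[OF q_lin q_ker g(1,2)] g(3) by blast
    then have "f \<in> chain_stab {f \<in> lin_aut sV. f ` U = U} n Vs" "g = quot_induced q f"
      using quot_induced_unique[OF q_surj] by (auto simp: chain_stab_def)
    then show "g \<in> quot_induced q ` chain_stab {f \<in> lin_aut sV. f ` U = U} n Vs"
      by blast
  qed
qed

end
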